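(* Let $(W_n)_{n\in\omega}$ be a standard numbering of the c.e. subsets of $\omega$, $\langle\cdot,\cdot\rangle$ a computable pairing bijection, and $V_n=\{(i,j)\mid\langle i,j\rangle\in W_n\}$. Let $\mathbf{T}$, $\mathbf{P}$, $\mathbf{O}$ be the classes of all c.e. transitive relations, all c.e. preorders, and all c.e. partial orders on $\omega$, respectively. Then: (1) there is a computable function $t$ such that for all $m,n$: $V_{t(n)}\in\mathbf{T}$; $V_n\in\mathbf{T}$ implies $V_n=V_{t(n)}$; and $V_m=V_n$ implies $V_{t(m)}=V_{t(n)}$. (2) There is a computable function $p$ such that for all $m,n$: $V_{p(n)}\in\mathbf{P}$; $V_n\in\mathbf{P}$ implies $V_n=V_{p(n)}$; and $V_m=V_n$ implies $V_{p(m)}=V_{p(n)}$. (3) There is a computable function $o$ such that for all $n$: $V_{o(n)}\in\mathbf{O}$, and $V_n\in\mathbf{O}$ implies $V_n=V_{o(n)}$. *)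

theory Defs
  imports Main "HOL-Library.Nat_Bijection"
begin

text \<open>A concrete model of computation: general recursive function terms
  (no arities; argument lists of arbitrary length) with a partial,
  inductively defined evaluation relation.\<close>

datatype recf = Z | S | Id nat | Cn recf "recf list" | Pr recf recf | Mn recf

inductive eval :: "recf \<Rightarrow> nat list \<Rightarrow> nat \<Rightarrow> bool" where
  eval_Z: "eval Z xs 0"
| eval_S: "eval S (x # xs) (Suc x)"
| eval_Id: "i < length xs \<Longrightarrow> eval (Id i) xs (xs ! i)"
| eval_Cn: "list_all2 (\<lambda>g y. eval g xs y) gs ys \<Longrightarrow> eval f ys y \<Longrightarrow> eval (Cn f gs) xs y"
| eval_Pr0: "eval f xs y \<Longrightarrow> eval (Pr f g) (0 # xs) y"
| eval_PrS: "eval (Pr f g) (n # xs) y \<Longrightarrow> eval g (n # y # xs) z \<Longrightarrow> eval (Pr f g) (Suc n # xs) z"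
| eval_Mn: "eval f (n # xs) 0 \<Longrightarrow> (\<forall>m<n. \<exists>k>0. eval f (m # xs) k) \<Longrightarrow> eval (Mn f) xs n"
monos list.rel_mono

primrec code :: "recf \<Rightarrow> nat" where
  "code Z = prod_encode (0, 0)"
| "code S = prod_encode (1, 0)"
| "code (Id i) = prod_encode (2, i)"
| "code (Cn f gs) = prod_encode (3, prod_encode (code f, list_encode (map code gs)))"
| "code (Pr f g) = prod_encode (4, prod_encode (code f, code g))"
| "code (Mn f) = prod_encode (5, code f)"

definition computable :: "(nat \<Rightarrow> nat) \<Rightarrow> bool" where
  "computable t \<longleftrightarrow> (\<exists>c. \<forall>n. eval c [n] (t n))"

text \<open>Standard numbering of c.e. sets: W n is the domain of the unary
  function computed by the program with code n (empty if n codes nothing).\<close>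
definition W :: "nat \<Rightarrow> nat set" where
  "W n = {x. \<exists>c y. code c = n \<and> eval c [x] y}"

definition V :: "nat \<Rightarrow> (nat \<times> nat) set" where
  "V n = {(i, j). prod_encode (i, j) \<in> W n}"

definition ce_rel :: "(nat \<times> nat) set \<Rightarrow> bool" where
  "ce_rel R \<longleftrightarrow> (\<exists>n. R = V n)"

definition ceT :: "(nat \<times> nat) set set" where
  "ceT = {R. ce_rel R \<and> trans R}"

definition ceP :: "(nat \<times> nat) set set" where
  "ceP = {R. ce_rel R \<and> preorder_on UNIV R}"

definition ceO :: "(nat \<times> nat) set set" where
  "ceO = {R. ce_rel R \<and> partial_order_on UNIV R}"

end

theory Submission
  imports Defs
begin

(* Enumerate V n in finite, increasing stages E s (the pairs certified by a derivation with code
   below s), whose union is V n. Then t n indexes the union of the (E s)^+, which is (V n)^+,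
   p n indexes the union of the (E s)^*, which is (V n)^*, and o n indexes the union of those
   (E s)^* that are still antisymmetric. The last union is directed, hence transitive and
   antisymmetric, and reflexive because E 0 is empty; if V n is a partial order, no stage is
   discarded and the union is V n itself.
   Each of these relations has the form {x. EX w. R w n x} with R decidable (indeed primitive
   recursive): a run of a program is certified by a finite derivation whose correctness is
   decidable by bounded search, and so are the stage tests. An unbounded search for w then gives
   the index uniformly in n. *)

section \<open>Directed unions of relations\<close>

lemma rtrancl_eq_self: "refl_on UNIV r \<Longrightarrow> trans r \<Longrightarrow> r\<^sup>* = r"
  by (auto simp: rtrancl_trancl_reflcl refl_on_def)

lemma rtrancl_UN_mono:
  fixes E :: "nat \<Rightarrow> 'a rel"
  assumes "mono E"
  shows "(\<Union>s. E s)\<^sup>* = (\<Union>s. (E s)\<^sup>*)"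
proof
  show "(\<Union>s. E s)\<^sup>* \<subseteq> (\<Union>s. (E s)\<^sup>*)"
  proof (rule subrelI)
    fix a c
    assume "(a, c) \<in> (\<Union>s. E s)\<^sup>*"
    then show "(a, c) \<in> (\<Union>s. (E s)\<^sup>*)"
    proof (induction rule: rtrancl_induct)
      case (step b c)
      then obtain s s' where "(a, b) \<in> (E s)\<^sup>*" "(b, c) \<in> E s'"
        by blast
      moreover have "E s \<subseteq> E (max s s')" "E s' \<subseteq> E (max s s')"
        using assms by (simp_all add: monoD)
      ultimately have "(a, c) \<in> (E (max s s'))\<^sup>*"
        by (meson rtrancl.rtrancl_into_rtrancl rtrancl_mono subsetD)
      then show ?case by blast
    qed blast
  qed
  show "(\<Union>s. (E s)\<^sup>*) \<subseteq> (\<Union>s. E s)\<^sup>*"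
    by (auto intro: rtrancl_mono[THEN subsetD, rotated])
qed

lemma trancl_UN_mono:
  fixes E :: "nat \<Rightarrow> 'a rel"
  assumes "mono E"
  shows "(\<Union>s. E s)\<^sup>+ = (\<Union>s. (E s)\<^sup>+)"
proof -
  have "(\<Union>s. E s)\<^sup>+ = (\<Union>s. E s) O (\<Union>s. E s)\<^sup>*"
    by (rule trancl_unfold_left)
  also have "\<dots> = (\<Union>s. E s O (E s)\<^sup>*)"
  proof
    show "(\<Union>s. E s) O (\<Union>s. E s)\<^sup>* \<subseteq> (\<Union>s. E s O (E s)\<^sup>*)"
    proof
      fix p
      assume "p \<in> (\<Union>s. E s) O (\<Union>s. E s)\<^sup>*"
      then obtain a b c s s' where "p = (a, c)" "(a, b) \<in> E s" "(b, c) \<in> (E s')\<^sup>*"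
        unfolding rtrancl_UN_mono[OF assms] by blast
      moreover have "E s \<subseteq> E (max s s')" "E s' \<subseteq> E (max s s')"
        using assms by (simp_all add: monoD)
      ultimately show "p \<in> (\<Union>s. E s O (E s)\<^sup>*)"
        by (meson UN_I UNIV_I relcomp.relcompI rtrancl_mono subsetD)
    qed
    show "(\<Union>s. E s O (E s)\<^sup>*) \<subseteq> (\<Union>s. E s) O (\<Union>s. E s)\<^sup>*"
      by (auto intro: rtrancl_mono[THEN subsetD, rotated])
  qed
  finally show ?thesis
    by (simp add: trancl_unfold_left)
qed

lemma partial_order_on_UN_antisym_rtrancl:
  fixes E :: "nat \<Rightarrow> 'a rel"
  assumes "mono E" and "antisym ((E 0)\<^sup>*)"
  shows "partial_order_on UNIV (\<Union>s\<in>{s. antisym ((E s)\<^sup>*)}. (E s)\<^sup>*)"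
    (is "partial_order_on UNIV (\<Union>s\<in>?G. _)")
proof -
  have join: "max s s' \<in> ?G \<and> (E s)\<^sup>* \<subseteq> (E (max s s'))\<^sup>* \<and> (E s')\<^sup>* \<subseteq> (E (max s s'))\<^sup>*"
    if "s \<in> ?G" "s' \<in> ?G" for s s'
    using that monoD[OF assms(1), of s "max s s'"] monoD[OF assms(1), of s' "max s s'"]
    by (auto simp: max_def rtrancl_mono)
  have "refl_on UNIV (\<Union>s\<in>?G. (E s)\<^sup>*)"
    using assms(2) by (auto simp: refl_on_def)
  moreover have "trans (\<Union>s\<in>?G. (E s)\<^sup>*)"
  proof (rule transI)
    fix a b c
    assume "(a, b) \<in> (\<Union>s\<in>?G. (E s)\<^sup>*)" "(b, c) \<in> (\<Union>s\<in>?G. (E s)\<^sup>*)"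
    then obtain s s' where "s \<in> ?G" "s' \<in> ?G" "(a, b) \<in> (E s)\<^sup>*" "(b, c) \<in> (E s')\<^sup>*"
      by blast
    with join[of s s'] show "(a, c) \<in> (\<Union>s\<in>?G. (E s)\<^sup>*)"
      by (meson UN_I rtrancl_trans subsetD)
  qed
  moreover have "antisym (\<Union>s\<in>?G. (E s)\<^sup>*)"
  proof (rule antisymI)
    fix a b
    assume "(a, b) \<in> (\<Union>s\<in>?G. (E s)\<^sup>*)" "(b, a) \<in> (\<Union>s\<in>?G. (E s)\<^sup>*)"
    then obtain s s' where "s \<in> ?G" "s' \<in> ?G" "(a, b) \<in> (E s)\<^sup>*" "(b, a) \<in> (E s')\<^sup>*"
      by blast
    with join[of s s'] show "a = b"
      by (metis antisymD mem_Collect_eq subsetD)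
  qed
  ultimately show ?thesis
    by (simp add: partial_order_on_def preorder_on_def)
qed

lemma UN_antisym_rtrancl_eq:
  fixes E :: "nat \<Rightarrow> 'a rel"
  assumes "mono E" and "partial_order_on UNIV (\<Union>s. E s)"
  shows "(\<Union>s\<in>{s. antisym ((E s)\<^sup>*)}. (E s)\<^sup>*) = (\<Union>s. E s)"
proof -
  have closed: "(\<Union>s. E s)\<^sup>* = (\<Union>s. E s)"
    using assms(2) by (simp add: rtrancl_eq_self partial_order_on_def preorder_on_def)
  then have "(E s)\<^sup>* \<subseteq> (\<Union>s. E s)" for s
    by (metis UN_upper UNIV_I rtrancl_mono)
  then have "antisym ((E s)\<^sup>*)" for s
    using partial_order_onD(3)[OF assms(2)] by (rule antisym_subset)
  then show ?thesis
    using closed rtrancl_UN_mono[OF assms(1)] by simp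
qed

inductive_cases eval_ZE: "eval Z xs y"
inductive_cases eval_SE: "eval S xs y"
inductive_cases eval_IdE: "eval (Id i) xs y"
inductive_cases eval_CnE: "eval (Cn f gs) xs y"
inductive_cases eval_PrE: "eval (Pr f g) xs y"
inductive_cases eval_MnE: "eval (Mn f) xs y"

lemma eval_deterministic: "eval c xs y \<Longrightarrow> eval c xs y' \<Longrightarrow> y = y'"
proof (induction arbitrary: y' rule: eval.induct)
  case (eval_Z xs)
  then show ?case by (blast elim: eval_ZE)
next
  case (eval_S x xs)
  then show ?case by (blast elim: eval_SE)
next
  case (eval_Id i xs)
  then show ?case by (blast elim: eval_IdE)
next
  case (eval_Cn xs gs ys f y)
  from eval_Cn.prems obtain ys' where gs: "list_all2 (\<lambda>g y. eval g xs y) gs ys'"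
    and f: "eval f ys' y'"
    by (blast elim: eval_CnE)
  have "ys = ys'"
    using eval_Cn.IH(1) gs
    by (induction arbitrary: ys' rule: list_all2_induct) (auto simp: list_all2_Cons1)
  then show ?case using eval_Cn.IH(2) f by blast
next
  case (eval_Pr0 f xs y g)
  from eval_Pr0.prems show ?case
    by (rule eval_PrE) (use eval_Pr0.IH in auto)
next
  case (eval_PrS f g n xs y z)
  from eval_PrS.prems show ?case
    by (rule eval_PrE) (use eval_PrS.IH in blast)+
next
  case (eval_Mn f n xs)
  from eval_Mn.prems obtain n' where n': "eval f (n' # xs) 0" "\<forall>m<n'. \<exists>k>0. eval f (m # xs) k"
    "y' = n'"
    by (blast elim: eval_MnE)
  have "\<not> n < n'" using n'(2) eval_Mn.IH(1) by fastforce
  moreover have "\<not> n' < n" using n'(1) eval_Mn.IH(2) by fastforce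
  ultimately show ?case using n'(3) by simp
qed

section \<open>Computable functions and relations\<close>

definition arg :: "nat list \<Rightarrow> nat \<Rightarrow> nat" where
  "arg xs i = (if i < length xs then xs ! i else 0)"

lemma arg_drop [simp]: "arg (drop d xs) i = arg xs (d + i)"
  by (auto simp: arg_def add.commute)

lemma arg_Cons_0 [simp]: "arg (x # xs) 0 = x"
  and arg_Cons_Suc [simp]: "arg (x # xs) (Suc i) = arg xs i"
  by (simp_all add: arg_def)

lemma map_arg_upt: "length xs = d + k \<Longrightarrow> map (\<lambda>i. arg xs (d + i)) [0..<k] = drop d xs"
  by (rule nth_equalityI) (auto simp: arg_def add.commute)

primrec const_prog :: "nat \<Rightarrow> recf" where
  "const_prog 0 = Z"
| "const_prog (Suc n) = Cn S [const_prog n]"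

lemma eval_const_prog: "eval (const_prog n) xs n"
proof (induction n)
  case 0
  show ?case by (simp add: eval_Z)
next
  case (Suc n)
  have "list_all2 (\<lambda>g y. eval g xs y) [const_prog n] [n]" using Suc by simp
  then show ?case by (auto intro: eval_Cn eval_S)
qed

definition rec_fn :: "nat \<Rightarrow> (nat list \<Rightarrow> nat) \<Rightarrow> bool" where
  "rec_fn k f \<longleftrightarrow> (\<exists>c. \<forall>xs. length xs = k \<longrightarrow> eval c xs (f xs))"

definition rec_rel :: "nat \<Rightarrow> (nat list \<Rightarrow> bool) \<Rightarrow> bool" where
  "rec_rel k P \<longleftrightarrow> rec_fn k (\<lambda>xs. if P xs then 1 else 0)"

lemma rec_fn_cong: "rec_fn k f \<Longrightarrow> (\<And>xs. length xs = k \<Longrightarrow> f xs = g xs) \<Longrightarrow> rec_fn k g"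
  unfolding rec_fn_def by metis

lemma rec_fn_const: "rec_fn k (\<lambda>xs. c)"
  unfolding rec_fn_def using eval_const_prog by blast

lemma rec_fn_arg: "rec_fn k (\<lambda>xs. arg xs i)"
proof (cases "i < k")
  case True
  then show ?thesis
    unfolding rec_fn_def by (intro exI[of _ "Id i"]) (auto simp: arg_def intro: eval_Id)
next
  case False
  then show ?thesis
    using rec_fn_const[of k 0] by (rule_tac rec_fn_cong) (auto simp: arg_def)
qed

lemma rec_fn_Suc: "rec_fn k f \<Longrightarrow> rec_fn k (\<lambda>xs. Suc (f xs))"
  unfolding rec_fn_def by (auto intro!: eval_Cn[where ys="[_]"] eval_S)

lemma rec_fn_compose:
  assumes h: "rec_fn m h" and gs: "\<forall>g\<in>set gs. rec_fn k g" and len: "length gs = m"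
  shows "rec_fn k (\<lambda>xs. h (map (\<lambda>g. g xs) gs))"
proof -
  obtain ch where ch: "\<forall>xs. length xs = m \<longrightarrow> eval ch xs (h xs)"
    using h unfolding rec_fn_def by auto
  have "\<exists>cs. list_all2 (\<lambda>c g. \<forall>xs. length xs = k \<longrightarrow> eval c xs (g xs)) cs gs"
    using gs by (induction gs) (auto simp: rec_fn_def list_all2_Cons2)
  then obtain cs where cs: "list_all2 (\<lambda>c g. \<forall>xs. length xs = k \<longrightarrow> eval c xs (g xs)) cs gs" ..
  have "eval (Cn ch cs) xs (h (map (\<lambda>g. g xs) gs))" if "length xs = k" for xs
  proof (rule eval_Cn)
    show "list_all2 (\<lambda>c y. eval c xs y) cs (map (\<lambda>g. g xs) gs)"
      using cs that by (induction rule: list_all2_induct) auto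
    show "eval ch (map (\<lambda>g. g xs) gs) (h (map (\<lambda>g. g xs) gs))"
      using ch len by simp
  qed
  then show ?thesis unfolding rec_fn_def by blast
qed

lemma rec_fn_comp1: "rec_fn 1 (\<lambda>ys. h (arg ys 0)) \<Longrightarrow> rec_fn k a \<Longrightarrow> rec_fn k (\<lambda>xs. h (a xs))"
  by (drule rec_fn_compose[where gs="[a]" and k=k]) auto

lemma rec_fn_comp3:
  "rec_fn 3 (\<lambda>ys. h (arg ys 0) (arg ys 1) (arg ys 2)) \<Longrightarrow> rec_fn k a \<Longrightarrow> rec_fn k b \<Longrightarrow> rec_fn k c \<Longrightarrow>
   rec_fn k (\<lambda>xs. h (a xs) (b xs) (c xs))"
  by (drule rec_fn_compose[where gs="[a, b, c]" and k=k]) (auto simp: numeral_3_eq_3 arg_def)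

lemma rec_fn_drop: "rec_fn k f \<Longrightarrow> rec_fn (d + k) (\<lambda>ys. f (drop d ys))"
  by (drule rec_fn_compose[where gs="map (\<lambda>i ys. arg ys (d + i)) [0..<k]" and k="d + k"])
    (auto simp: rec_fn_arg o_def map_arg_upt elim: rec_fn_cong)

lemma rec_fn_rec_nat:
  assumes n: "rec_fn k n" and f: "rec_fn k f"
    and g: "rec_fn (Suc (Suc k)) (\<lambda>ys. g (arg ys 0) (arg ys 1) (drop 2 ys))"
  shows "rec_fn k (\<lambda>xs. rec_nat (f xs) (\<lambda>m r. g m r xs) (n xs))"
proof -
  obtain cf where cf: "\<forall>xs. length xs = k \<longrightarrow> eval cf xs (f xs)"
    using f unfolding rec_fn_def by auto
  obtain cg where cg: "\<forall>ys. length ys = Suc (Suc k) \<longrightarrow> eval cg ys (g (arg ys 0) (arg ys 1) (drop 2 ys))"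
    using g unfolding rec_fn_def by auto
  have eval_Pr: "eval (Pr cf cg) (m # xs) (rec_nat (f xs) (\<lambda>m r. g m r xs) m)" if "length xs = k" for m xs
  proof (induction m)
    case 0
    show ?case using cf that by (simp add: eval_Pr0)
  next
    case (Suc m)
    then show ?case
      using cg[rule_format, of "m # rec_nat (f xs) (\<lambda>m r. g m r xs) m # xs"] that by (auto intro: eval_PrS)
  qed
  have "rec_fn (Suc k) (\<lambda>ys. rec_nat (f (drop 1 ys)) (\<lambda>m r. g m r (drop 1 ys)) (arg ys 0))"
    unfolding rec_fn_def
  proof (intro exI allI impI)
    fix ys :: "nat list"
    assume "length ys = Suc k"
    then show "eval (Pr cf cg) ys (rec_nat (f (drop 1 ys)) (\<lambda>m r. g m r (drop 1 ys)) (arg ys 0))"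
      using eval_Pr by (cases ys) auto
  qed
  from rec_fn_compose[OF this, where gs="n # map (\<lambda>i xs. arg xs (0 + i)) [0..<k]" and k=k]
  show ?thesis
    by (auto simp: n rec_fn_arg o_def map_arg_upt[where d=0, simplified] elim: rec_fn_cong)
qed

lemma rec_fn_add: "rec_fn k a \<Longrightarrow> rec_fn k b \<Longrightarrow> rec_fn k (\<lambda>xs. a xs + b xs)"
proof -
  assume a: "rec_fn k a" and b: "rec_fn k b"
  have "rec_fn k (\<lambda>xs. rec_nat (a xs) (\<lambda>m r. Suc r) (b xs))"
    by (rule rec_fn_rec_nat[OF b a]) (intro rec_fn_arg rec_fn_Suc)
  moreover have "rec_nat x (\<lambda>m r. Suc r) y = x + y" for x y :: nat
    by (induction y) auto
  ultimately show ?thesis by (rule rec_fn_cong)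
qed

lemma rec_fn_pred: "rec_fn k a \<Longrightarrow> rec_fn k (\<lambda>xs. a xs - 1)"
proof -
  assume a: "rec_fn k a"
  have "rec_fn k (\<lambda>xs. rec_nat 0 (\<lambda>m r. m) (a xs))"
    by (rule rec_fn_rec_nat[OF a rec_fn_const]) (simp add: rec_fn_arg)
  moreover have "rec_nat 0 (\<lambda>m r. m) y = y - 1" for y :: nat
    by (cases y) auto
  ultimately show ?thesis by (rule rec_fn_cong)
qed

lemma rec_fn_diff: "rec_fn k a \<Longrightarrow> rec_fn k b \<Longrightarrow> rec_fn k (\<lambda>xs. a xs - b xs)"
proof -
  assume a: "rec_fn k a" and b: "rec_fn k b"
  have "rec_fn k (\<lambda>xs. rec_nat (a xs) (\<lambda>m r. r - 1) (b xs))"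
    by (rule rec_fn_rec_nat[OF b a]) (intro rec_fn_arg rec_fn_pred)
  moreover have "rec_nat x (\<lambda>m r. r - 1) y = x - y" for x y :: nat
    by (induction y) auto
  ultimately show ?thesis by (rule rec_fn_cong)
qed

lemma rec_fn_mult: "rec_fn k a \<Longrightarrow> rec_fn k b \<Longrightarrow> rec_fn k (\<lambda>xs. a xs * b xs)"
proof -
  assume a: "rec_fn k a" and b: "rec_fn k b"
  have "rec_fn k (\<lambda>xs. rec_nat 0 (\<lambda>m r. r + a xs) (b xs))"
    by (rule rec_fn_rec_nat[OF b rec_fn_const])
      (intro rec_fn_add rec_fn_arg rec_fn_drop[OF a, where d=2, simplified])
  moreover have "rec_nat 0 (\<lambda>m r. r + x) y = x * y" for x y :: nat
    by (induction y) auto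
  ultimately show ?thesis by (rule rec_fn_cong)
qed

lemma rec_fn_sum:
  assumes b: "rec_fn k b" and f: "rec_fn (Suc k) (\<lambda>ys. f (arg ys 0) (drop 1 ys))"
  shows "rec_fn k (\<lambda>xs. \<Sum>e<b xs. f e xs)"
proof -
  have "rec_fn (Suc (Suc k)) (\<lambda>ys. f (arg ys 0) (drop 2 ys))"
    using rec_fn_compose[OF f, where gs="(\<lambda>ys. arg ys 0) # map (\<lambda>i ys. arg ys (2 + i)) [0..<k]"
        and k="Suc (Suc k)"]
    by (auto simp: rec_fn_arg o_def map_arg_upt[where d=2, simplified] elim!: rec_fn_cong)
  then have "rec_fn k (\<lambda>xs. rec_nat 0 (\<lambda>m r. r + f m xs) (b xs))"
    by (intro rec_fn_rec_nat[OF b rec_fn_const] rec_fn_add rec_fn_arg) simp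
  moreover have "rec_nat 0 (\<lambda>m r. r + f m x) y = (\<Sum>e<y. f e x)" for x y
    by (induction y) auto
  ultimately show ?thesis by (rule rec_fn_cong)
qed

lemma rec_fn_If:
  "rec_rel k P \<Longrightarrow> rec_fn k f \<Longrightarrow> rec_fn k g \<Longrightarrow> rec_fn k (\<lambda>xs. if P xs then f xs else g xs)"
proof -
  assume P: "rec_rel k P" and f: "rec_fn k f" and g: "rec_fn k g"
  have "rec_fn k (\<lambda>xs. rec_nat (g xs) (\<lambda>m r. f xs) (if P xs then 1 else 0))"
    by (rule rec_fn_rec_nat[OF P[unfolded rec_rel_def] g])
      (rule rec_fn_drop[OF f, where d=2, simplified])
  then show ?thesis by (rule rec_fn_cong) simp
qed

lemma rec_rel_const: "rec_rel k (\<lambda>xs. P)"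
  unfolding rec_rel_def by (rule rec_fn_const)

lemma rec_rel_eq_0: "rec_fn k a \<Longrightarrow> rec_rel k (\<lambda>xs. a xs = 0)"
  unfolding rec_rel_def by (rule rec_fn_cong[OF rec_fn_diff[OF rec_fn_const[of k 1]]]) auto

lemma rec_rel_not: "rec_rel k P \<Longrightarrow> rec_rel k (\<lambda>xs. \<not> P xs)"
  unfolding rec_rel_def by (rule rec_fn_cong[OF rec_fn_diff[OF rec_fn_const[of k 1]]]) auto

lemma rec_rel_conj: "rec_rel k P \<Longrightarrow> rec_rel k Q \<Longrightarrow> rec_rel k (\<lambda>xs. P xs \<and> Q xs)"
  unfolding rec_rel_def by (rule rec_fn_cong, erule (1) rec_fn_mult) auto

lemma rec_rel_disj: "rec_rel k P \<Longrightarrow> rec_rel k Q \<Longrightarrow> rec_rel k (\<lambda>xs. P xs \<or> Q xs)"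
  using rec_rel_not[OF rec_rel_conj[OF rec_rel_not rec_rel_not]] by simp

lemma rec_rel_le: "rec_fn k a \<Longrightarrow> rec_fn k b \<Longrightarrow> rec_rel k (\<lambda>xs. a xs \<le> b xs)"
  using rec_rel_eq_0[OF rec_fn_diff] by simp

lemma rec_rel_less: "rec_fn k a \<Longrightarrow> rec_fn k b \<Longrightarrow> rec_rel k (\<lambda>xs. a xs < b xs)"
  using rec_rel_le[OF rec_fn_Suc] by (simp add: Suc_le_eq)

lemma rec_rel_eq: "rec_fn k a \<Longrightarrow> rec_fn k b \<Longrightarrow> rec_rel k (\<lambda>xs. a xs = b xs)"
  using rec_rel_conj[OF rec_rel_le rec_rel_le] by (simp add: eq_iff)

lemma rec_rel_ex_less:
  assumes b: "rec_fn k b" and P: "rec_rel (Suc k) (\<lambda>ys. P (arg ys 0) (drop 1 ys))"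
  shows "rec_rel k (\<lambda>xs. \<exists>e<b xs. P e xs)"
proof -
  have "rec_rel k (\<lambda>xs. \<not> (\<Sum>e<b xs. if P e xs then 1 else 0) = (0::nat))"
    by (intro rec_rel_not rec_rel_eq_0 rec_fn_sum[OF b P[unfolded rec_rel_def]])
  moreover have "(\<Sum>e<y. if Q e then 1 else 0) = (0::nat) \<longleftrightarrow> \<not> (\<exists>e<y. Q e)" for y :: nat and Q
    by (induction y) (auto simp: less_Suc_eq)
  ultimately show ?thesis by simp
qed

lemma rec_rel_all_less:
  assumes b: "rec_fn k b" and P: "rec_rel (Suc k) (\<lambda>ys. P (arg ys 0) (drop 1 ys))"
  shows "rec_rel k (\<lambda>xs. \<forall>e<b xs. P e xs)"
  using rec_rel_not[OF rec_rel_ex_less[OF b rec_rel_not[OF P]]] by simp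

lemma rec_rel_comp1: "rec_rel 1 (\<lambda>ys. h (arg ys 0)) \<Longrightarrow> rec_fn k a \<Longrightarrow> rec_rel k (\<lambda>xs. h (a xs))"
  unfolding rec_rel_def by (rule rec_fn_comp1[where h="\<lambda>x. if h x then 1 else 0"])

lemma rec_rel_comp3:
  "rec_rel 3 (\<lambda>ys. h (arg ys 0) (arg ys 1) (arg ys 2)) \<Longrightarrow> rec_fn k a \<Longrightarrow> rec_fn k b \<Longrightarrow> rec_fn k c \<Longrightarrow>
   rec_rel k (\<lambda>xs. h (a xs) (b xs) (c xs))"
  unfolding rec_rel_def by (rule rec_fn_comp3[where h="\<lambda>x y z. if h x y z then 1 else 0"])

lemma rec_rel_compose:
  "rec_rel m h \<Longrightarrow> \<forall>g\<in>set gs. rec_fn k g \<Longrightarrow> length gs = m \<Longrightarrow>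
    rec_rel k (\<lambda>xs. h (map (\<lambda>g. g xs) gs))"
  unfolding rec_rel_def by (rule rec_fn_compose[where h="\<lambda>ys. if h ys then 1 else 0"])

text \<open>Bounded quantifiers, sums and \<^const>\<open>rec_nat\<close> add leading arguments, which these rules expose
  as \<open>arg ys 0\<close> (and \<open>arg ys 1\<close>); the outer arguments then appear as \<open>arg (drop d ys) i\<close>, which
  \<open>arg_drop\<close> normalises. A goal \<open>rec_fn k t\<close> for an explicit term \<open>t\<close> is thus proved by
  \<open>(rule rec_fn_intros | simp only: arg_drop)+\<close>.\<close>

lemmas rec_fn_intros = rec_fn_const rec_fn_arg rec_fn_Suc rec_fn_add rec_fn_diff rec_fn_mult rec_fn_If
  rec_fn_sum rec_fn_rec_nat rec_rel_const rec_rel_not rec_rel_conj rec_rel_disj rec_rel_le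
  rec_rel_less rec_rel_eq rec_rel_ex_less rec_rel_all_less

section \<open>Arithmetic coding of pairs and lists\<close>

definition c_pair :: "nat \<Rightarrow> nat \<Rightarrow> nat" where
  "c_pair a b = prod_encode (a, b)"

definition c_fst :: "nat \<Rightarrow> nat" where
  "c_fst z = fst (prod_decode z)"

definition c_snd :: "nat \<Rightarrow> nat" where
  "c_snd z = snd (prod_decode z)"

lemma c_fst_c_pair [simp]: "c_fst (c_pair a b) = a"
  and c_snd_c_pair [simp]: "c_snd (c_pair a b) = b"
  by (simp_all add: c_fst_def c_snd_def c_pair_def)

lemma c_pair_c_fst_c_snd [simp]: "c_pair (c_fst z) (c_snd z) = z"
  by (simp add: c_fst_def c_snd_def c_pair_def)

lemma c_pair_eq_iff [simp]: "c_pair a b = c_pair c d \<longleftrightarrow> a = c \<and> b = d"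
  by (simp add: c_pair_def)

lemma le_c_pair_1: "a \<le> c_pair a b"
  and le_c_pair_2: "b \<le> c_pair a b"
  by (simp_all add: c_pair_def le_prod_encode_1 le_prod_encode_2)

lemma c_fst_le: "c_fst z \<le> z"
  and c_snd_le: "c_snd z \<le> z"
  by (metis le_c_pair_1 c_pair_c_fst_c_snd, metis le_c_pair_2 c_pair_c_fst_c_snd)

lemma c_pair_mono: "a \<le> a' \<Longrightarrow> b \<le> b' \<Longrightarrow> c_pair a b \<le> c_pair a' b'"
proof -
  assume "a \<le> a'" "b \<le> b'"
  moreover have "triangle x \<le> triangle y" if "x \<le> y" for x y
    using that by (induction y) (auto simp: le_Suc_eq)
  ultimately show ?thesis by (simp add: c_pair_def prod_encode_def add_mono)
qed

lemma rec_fn_c_pair: "rec_fn k a \<Longrightarrow> rec_fn k b \<Longrightarrow> rec_fn k (\<lambda>xs. c_pair (a xs) (b xs))"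
proof -
  assume a: "rec_fn k a" and b: "rec_fn k b"
  have "rec_fn k (\<lambda>xs. rec_nat 0 (\<lambda>m r. r + Suc m) (a xs + b xs) + a xs)"
    by (intro rec_fn_intros a b)
  moreover have "rec_nat 0 (\<lambda>m r. r + Suc m) y = triangle y" for y
    by (induction y) auto
  ultimately show ?thesis
    by (simp add: c_pair_def prod_encode_def)
qed

lemma c_fst_eq_sum: "c_fst z = (\<Sum>a<Suc z. if \<exists>b<Suc z. c_pair a b = z then a else 0)"
proof -
  have "(\<exists>b<Suc z. c_pair a b = z) \<longleftrightarrow> a = c_fst z" for a
    using c_snd_le[of z] by (auto simp: less_Suc_eq_le)
  then show ?thesis
    using c_fst_le[of z] by (simp add: sum.delta')
qed

lemma c_snd_eq_sum: "c_snd z = (\<Sum>b<Suc z. if \<exists>a<Suc z. c_pair a b = z then b else 0)"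
proof -
  have "(\<exists>a<Suc z. c_pair a b = z) \<longleftrightarrow> b = c_snd z" for b
    using c_fst_le[of z] by (auto simp: less_Suc_eq_le)
  then show ?thesis
    using c_snd_le[of z] by (simp add: sum.delta')
qed

lemma rec_fn_c_fst: "rec_fn k a \<Longrightarrow> rec_fn k (\<lambda>xs. c_fst (a xs))"
  by (rule rec_fn_comp1, unfold c_fst_eq_sum) (rule rec_fn_intros rec_fn_c_pair | simp only: arg_drop)+

lemma rec_fn_c_snd: "rec_fn k a \<Longrightarrow> rec_fn k (\<lambda>xs. c_snd (a xs))"
  by (rule rec_fn_comp1, unfold c_snd_eq_sum) (rule rec_fn_intros rec_fn_c_pair | simp only: arg_drop)+

definition c_cons :: "nat \<Rightarrow> nat \<Rightarrow> nat" where
  "c_cons a z = Suc (c_pair a z)"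

definition c_hd :: "nat \<Rightarrow> nat" where
  "c_hd z = c_fst (z - 1)"

definition c_tl :: "nat \<Rightarrow> nat" where
  "c_tl z = c_snd (z - 1)"

definition c_drop :: "nat \<Rightarrow> nat \<Rightarrow> nat" where
  "c_drop k z = (c_tl ^^ k) z"

definition c_nth :: "nat \<Rightarrow> nat \<Rightarrow> nat" where
  "c_nth z i = c_hd (c_drop i z)"

definition c_len :: "nat \<Rightarrow> nat" where
  "c_len z = (\<Sum>k<z. if c_drop k z = 0 then 0 else 1)"

lemma list_encode_Cons: "list_encode (a # L) = c_cons a (list_encode L)"
  by (simp add: c_cons_def c_pair_def)

declare list_encode.simps(2) [simp del] list_encode_Cons [simp]

lemma c_hd_c_cons [simp]: "c_hd (c_cons a z) = a"
  and c_tl_c_cons [simp]: "c_tl (c_cons a z) = z"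
  by (simp_all add: c_hd_def c_tl_def c_cons_def)

lemma c_nth_c_cons_0 [simp]: "c_nth (c_cons a z) 0 = a"
  and c_nth_c_cons_Suc [simp]: "c_nth (c_cons a z) (Suc i) = c_nth z i"
  by (simp_all add: c_nth_def c_drop_def funpow_Suc_right del: funpow.simps)

lemma list_decode_c_cons [simp]: "list_decode (c_cons a z) = a # list_decode z"
  by (metis list_encode_Cons list_decode_inverse list_encode_inverse)

lemma list_decode_eq_Nil_iff: "list_decode z = [] \<longleftrightarrow> z = 0"
  by (metis list_decode.simps(1) list_decode_inverse list_encode.simps(1))

lemma list_decode_c_tl: "list_decode (c_tl z) = tl (list_decode z)"
  using c_snd_le[of 0] by (cases z) (simp_all add: c_tl_def c_snd_def split: prod.split)

lemma list_decode_c_drop: "list_decode (c_drop k z) = drop k (list_decode z)"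
  by (induction k) (simp_all add: c_drop_def list_decode_c_tl drop_Suc tl_drop)

lemma c_nth_eq_nth: "i < length (list_decode z) \<Longrightarrow> c_nth z i = list_decode z ! i"
proof -
  assume i: "i < length (list_decode z)"
  have "c_hd w = hd (list_decode w)" if "w \<noteq> 0" for w
    using that by (cases w) (simp_all add: c_hd_def c_fst_def split: prod.split)
  moreover have "c_drop i z \<noteq> 0"
    using i list_decode_eq_Nil_iff[of "c_drop i z"] by (auto simp: list_decode_c_drop)
  ultimately show ?thesis
    using i by (simp add: c_nth_def list_decode_c_drop hd_drop_conv_nth)
qed

lemma length_list_decode_le: "length (list_decode z) \<le> z"
proof -
  have "length L \<le> list_encode L" for L
    by (induction L) (auto simp: c_cons_def intro: order_trans[OF _ le_c_pair_2])
  then show ?thesis by (metis list_decode_inverse)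
qed

lemma member_list_decode_less: "x \<in> set (list_decode w) \<Longrightarrow> x < w"
proof -
  have "x < list_encode L" if "x \<in> set L" for L
    using that
  proof (induction L)
    case (Cons a L)
    have "a \<le> c_pair a (list_encode L)" "list_encode L \<le> c_pair a (list_encode L)"
      by (rule le_c_pair_1, rule le_c_pair_2)
    then show ?case
      using Cons by (auto simp: c_cons_def)
  qed simp
  then show "x \<in> set (list_decode w) \<Longrightarrow> x < w"
    by (metis list_decode_inverse)
qed

lemma c_len_eq_length: "c_len z = length (list_decode z)"
proof -
  have "c_drop k z = 0 \<longleftrightarrow> length (list_decode z) \<le> k" for k
    by (metis list_decode_eq_Nil_iff list_decode_c_drop drop_eq_Nil)
  then have "c_len z = card ({..<z} \<inter> {k. k < length (list_decode z)})"
    by (simp add: c_len_def sum.If_cases) (auto intro!: arg_cong[where f=card])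
  also have "{..<z} \<inter> {k. k < length (list_decode z)} = {..<length (list_decode z)}"
    using length_list_decode_le[of z] by auto
  finally show ?thesis by simp
qed

lemma c_len_c_cons [simp]: "c_len (c_cons a z) = Suc (c_len z)"
  by (simp add: c_len_eq_length)

lemma c_len_list_encode [simp]: "c_len (list_encode L) = length L"
  by (simp add: c_len_eq_length)

lemma c_nth_list_encode [simp]: "i < length L \<Longrightarrow> c_nth (list_encode L) i = L ! i"
  by (simp add: c_nth_eq_nth)

lemma c_tl_list_encode: "c_tl (list_encode L) = list_encode (tl L)"
  by (metis list_decode_c_tl list_decode_inverse list_encode_inverse)

lemma rec_fn_c_cons: "rec_fn k a \<Longrightarrow> rec_fn k b \<Longrightarrow> rec_fn k (\<lambda>xs. c_cons (a xs) (b xs))"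
  unfolding c_cons_def by (intro rec_fn_Suc rec_fn_c_pair)

lemma rec_fn_c_tl: "rec_fn k a \<Longrightarrow> rec_fn k (\<lambda>xs. c_tl (a xs))"
  unfolding c_tl_def by (intro rec_fn_c_snd rec_fn_diff rec_fn_const)

lemma rec_fn_c_drop: "rec_fn k a \<Longrightarrow> rec_fn k b \<Longrightarrow> rec_fn k (\<lambda>xs. c_drop (a xs) (b xs))"
proof -
  assume a: "rec_fn k a" and b: "rec_fn k b"
  have "rec_fn k (\<lambda>xs. rec_nat (b xs) (\<lambda>m r. c_tl r) (a xs))"
    by (intro rec_fn_rec_nat[OF a b] rec_fn_c_tl rec_fn_arg)
  moreover have "rec_nat z (\<lambda>m r. c_tl r) i = c_drop i z" for i z
    by (induction i) (auto simp: c_drop_def)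
  ultimately show ?thesis by (rule rec_fn_cong)
qed

lemma rec_fn_c_nth: "rec_fn k a \<Longrightarrow> rec_fn k b \<Longrightarrow> rec_fn k (\<lambda>xs. c_nth (a xs) (b xs))"
  unfolding c_nth_def c_hd_def by (intro rec_fn_c_fst rec_fn_diff rec_fn_c_drop rec_fn_const)

lemma rec_fn_c_len: "rec_fn k a \<Longrightarrow> rec_fn k (\<lambda>xs. c_len (a xs))"
  by (rule rec_fn_comp1, unfold c_len_def) (rule rec_fn_intros rec_fn_c_drop | simp only: arg_drop)+

lemmas rec_fn_code_intros = rec_fn_intros rec_fn_c_pair rec_fn_c_fst rec_fn_c_snd rec_fn_c_cons rec_fn_c_tl
  rec_fn_c_nth rec_fn_c_len

section \<open>Derivations certifying computations\<close>

lemma code_c_pair: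
  "code Z = c_pair 0 0" "code S = c_pair 1 0" "code (Id i) = c_pair 2 i"
  "code (Cn f gs) = c_pair 3 (c_pair (code f) (list_encode (map code gs)))"
  "code (Pr f g) = c_pair 4 (c_pair (code f) (code g))" "code (Mn f) = c_pair 5 (code f)"
  by (simp_all add: c_pair_def)

declare code.simps [simp del]

lemma code_eq_iff [simp]: "code a = code b \<longleftrightarrow> a = b"
proof (induction a arbitrary: b)
  case (Cn f gs)
  have "gs = gs'" if "map code gs = map code gs'" for gs'
    using that Cn.IH(2) by (induction gs arbitrary: gs') (auto simp: Cons_eq_map_conv)
  then show ?case
    using Cn.IH(1) by (cases b) (auto simp: code_c_pair list_encode_eq)
qed (case_tac b; auto simp: code_c_pair)+

lemma code_eq_Pr:
  "code c = c_pair 4 q \<Longrightarrow> \<exists>c1 c2. c = Pr c1 c2 \<and> code c1 = c_fst q \<and> code c2 = c_snd q"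
  by (cases c) (auto simp: code_c_pair)

text \<open>A fact \<open>fact_code p x y\<close> asserts that the program with code \<open>p\<close> maps the argument list
  with code \<open>x\<close> to \<open>y\<close>.\<close>

definition fact_code :: "nat \<Rightarrow> nat \<Rightarrow> nat \<Rightarrow> nat" where
  "fact_code p x y = c_pair p (c_pair x y)"

definition fact_prog :: "nat \<Rightarrow> nat" where
  "fact_prog f = c_fst f"

definition fact_args :: "nat \<Rightarrow> nat" where
  "fact_args f = c_fst (c_snd f)"

definition fact_val :: "nat \<Rightarrow> nat" where
  "fact_val f = c_snd (c_snd f)"

lemma fact_code_sel [simp]:
  "fact_prog (fact_code p x y) = p" "fact_args (fact_code p x y) = x" "fact_val (fact_code p x y) = y"
  by (simp_all add: fact_code_def fact_prog_def fact_args_def fact_val_def)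

lemma fact_code_collapse: "fact_code (fact_prog f) (fact_args f) (fact_val f) = f"
  by (simp add: fact_code_def fact_prog_def fact_args_def fact_val_def)

definition sound_fact :: "nat \<Rightarrow> bool" where
  "sound_fact f \<longleftrightarrow> (\<exists>c. code c = fact_prog f \<and> eval c (list_decode (fact_args f)) (fact_val f))"

text \<open>One rule of \<^const>\<open>eval\<close> each, as a check on codes: \<open>A\<close> holds for the facts derived
  before, \<open>C\<close> for the program codes certified before.\<close>

definition by_Z :: "nat \<Rightarrow> bool" where
  "by_Z f \<longleftrightarrow> fact_prog f = c_pair 0 0 \<and> fact_val f = 0"

definition by_S :: "nat \<Rightarrow> bool" where
  "by_S f \<longleftrightarrow> fact_prog f = c_pair 1 0 \<and> 0 < c_len (fact_args f)
    \<and> fact_val f = Suc (c_nth (fact_args f) 0)"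

definition by_Id :: "nat \<Rightarrow> bool" where
  "by_Id f \<longleftrightarrow> c_fst (fact_prog f) = 2 \<and> c_snd (fact_prog f) < c_len (fact_args f)
    \<and> fact_val f = c_nth (fact_args f) (c_snd (fact_prog f))"

definition by_Cn :: "(nat \<Rightarrow> bool) \<Rightarrow> nat \<Rightarrow> bool" where
  "by_Cn A f \<longleftrightarrow> c_fst (fact_prog f) = 3
    \<and> (\<exists>g. A g \<and> fact_prog g = c_fst (c_snd (fact_prog f)) \<and> fact_val g = fact_val f
      \<and> c_len (fact_args g) = c_len (c_snd (c_snd (fact_prog f)))
      \<and> (\<forall>k<c_len (c_snd (c_snd (fact_prog f))). \<exists>h. A h
          \<and> fact_prog h = c_nth (c_snd (c_snd (fact_prog f))) k \<and> fact_args h = fact_args f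
          \<and> fact_val h = c_nth (fact_args g) k))"

definition by_Pr0 :: "(nat \<Rightarrow> bool) \<Rightarrow> (nat \<Rightarrow> bool) \<Rightarrow> nat \<Rightarrow> bool" where
  "by_Pr0 A C f \<longleftrightarrow> c_fst (fact_prog f) = 4 \<and> 0 < c_len (fact_args f) \<and> c_nth (fact_args f) 0 = 0
    \<and> (\<exists>g. A g \<and> fact_prog g = c_fst (c_snd (fact_prog f)) \<and> fact_args g = c_tl (fact_args f)
      \<and> fact_val g = fact_val f)
    \<and> C (fact_prog f)"

definition by_PrS :: "(nat \<Rightarrow> bool) \<Rightarrow> nat \<Rightarrow> bool" where
  "by_PrS A f \<longleftrightarrow> c_fst (fact_prog f) = 4 \<and> 0 < c_len (fact_args f) \<and> 0 < c_nth (fact_args f) 0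
    \<and> (\<exists>g. A g \<and> (\<exists>h. A h \<and> fact_prog g = fact_prog f
      \<and> fact_args g = c_cons (c_nth (fact_args f) 0 - 1) (c_tl (fact_args f))
      \<and> fact_prog h = c_snd (c_snd (fact_prog f))
      \<and> fact_args h = c_cons (c_nth (fact_args f) 0 - 1) (c_cons (fact_val g) (c_tl (fact_args f)))
      \<and> fact_val h = fact_val f))"

definition by_Mn :: "(nat \<Rightarrow> bool) \<Rightarrow> nat \<Rightarrow> bool" where
  "by_Mn A f \<longleftrightarrow> c_fst (fact_prog f) = 5
    \<and> (\<exists>g. A g \<and> fact_prog g = c_snd (fact_prog f) \<and> fact_args g = c_cons (fact_val f) (fact_args f)
      \<and> fact_val g = 0)
    \<and> (\<forall>m<fact_val f. \<exists>g. A g \<and> fact_prog g = c_snd (fact_prog f)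
      \<and> fact_args g = c_cons m (fact_args f) \<and> 0 < fact_val g)"

definition justified_fact :: "(nat \<Rightarrow> bool) \<Rightarrow> (nat \<Rightarrow> bool) \<Rightarrow> nat \<Rightarrow> bool" where
  "justified_fact A C f \<longleftrightarrow>
    by_Z f \<or> by_S f \<or> by_Id f \<or> by_Cn A f \<or> by_Pr0 A C f \<or> by_PrS A f \<or> by_Mn A f"

definition justified_code :: "(nat \<Rightarrow> bool) \<Rightarrow> nat \<Rightarrow> bool" where
  "justified_code C p \<longleftrightarrow> p = c_pair 0 0 \<or> p = c_pair 1 0 \<or> c_fst p = 2
    \<or> (c_fst p = 3 \<and> C (c_fst (c_snd p)) \<and> (\<forall>k<c_len (c_snd (c_snd p)). C (c_nth (c_snd (c_snd p)) k)))
    \<or> (c_fst p = 4 \<and> C (c_fst (c_snd p)) \<and> C (c_snd (c_snd p)))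
    \<or> (c_fst p = 5 \<and> C (c_snd p))"

text \<open>A derivation is a list of entries \<open>c_pair 0 f\<close>, asserting the fact \<open>f\<close>, and \<open>c_pair 1 p\<close>,
  certifying that \<open>p\<close> is the code of a program, each justified by earlier entries. Certificates
  are needed only for \<^const>\<open>by_Pr0\<close>, whose premises say nothing about the step function of
  the recursion.\<close>

definition justified_entry :: "(nat \<Rightarrow> bool) \<Rightarrow> (nat \<Rightarrow> bool) \<Rightarrow> nat \<Rightarrow> bool" where
  "justified_entry A C e \<longleftrightarrow>
    (c_fst e = 0 \<and> justified_fact A C (c_snd e)) \<or> (c_fst e = 1 \<and> justified_code C (c_snd e))"

definition derivation :: "nat list \<Rightarrow> bool" where
  "derivation L \<longleftrightarrow> (\<forall>i<length L.
    justified_entry (\<lambda>f. c_pair 0 f \<in> set (take i L)) (\<lambda>p. c_pair 1 p \<in> set (take i L)) (L ! i))"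

lemma c_pair_tag: "c_fst p = t \<Longrightarrow> p = c_pair t (c_snd p)"
  by (metis c_pair_c_fst_c_snd)

lemma justified_code_sound:
  assumes "justified_code C p" and C: "\<And>q. C q \<Longrightarrow> q \<in> range code"
  shows "p \<in> range code"
  using assms(1) unfolding justified_code_def
proof (elim disjE conjE)
  assume "c_fst p = 2"
  then have "p = code (Id (c_snd p))"
    by (simp add: code_c_pair c_pair_tag)
  then show ?thesis by blast
next
  define gs where "gs = list_decode (c_snd (c_snd p))"
  assume p: "c_fst p = 3" "C (c_fst (c_snd p))" "\<forall>k<c_len (c_snd (c_snd p)). C (c_nth (c_snd (c_snd p)) k)"
  obtain f where f: "code f = c_fst (c_snd p)"
    using C p(2) by (metis rangeE)
  have "set gs \<subseteq> range code"
    using C p(3) by (auto simp: gs_def c_len_eq_length c_nth_eq_nth in_set_conv_nth)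
  then have "map code (map (inv code) gs) = gs"
    by (simp add: map_idI f_inv_into_f subset_iff)
  then have "code (Cn f (map (inv code) gs)) = p"
    using f p(1) by (simp add: code_c_pair gs_def c_pair_tag[symmetric])
  then show ?thesis by (metis rangeI)
next
  assume p: "c_fst p = 4" "C (c_fst (c_snd p))" "C (c_snd (c_snd p))"
  obtain f g where "code f = c_fst (c_snd p)" "code g = c_snd (c_snd p)"
    using C p(2,3) by (metis rangeE)
  then have "code (Pr f g) = p"
    using p(1) by (simp add: code_c_pair c_pair_tag[symmetric])
  then show ?thesis by (metis rangeI)
next
  assume p: "c_fst p = 5" "C (c_snd p)"
  obtain f where "code f = c_snd p"
    using C p(2) by (metis rangeE)
  then have "code (Mn f) = p"
    using p(1) by (simp add: code_c_pair c_pair_tag[symmetric])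
  then show ?thesis by (metis rangeI)
qed (metis code_c_pair(1) rangeI, metis code_c_pair(2) rangeI)

lemma sound_by_Z: "by_Z f \<Longrightarrow> sound_fact f"
  unfolding by_Z_def sound_fact_def by (metis code_c_pair(1) eval_Z)

lemma sound_by_S: "by_S f \<Longrightarrow> sound_fact f"
  unfolding by_S_def sound_fact_def
  by (cases "list_decode (fact_args f)")
    (auto simp: c_len_eq_length c_nth_eq_nth code_c_pair intro!: exI[of _ S] eval_S)

lemma sound_by_Id: "by_Id f \<Longrightarrow> sound_fact f"
  unfolding by_Id_def sound_fact_def
  by (auto simp: c_len_eq_length c_nth_eq_nth code_c_pair c_pair_tag[symmetric]
      intro!: exI[of _ "Id _"] eval_Id)

lemma sound_by_Cn:
  assumes "by_Cn A f" and A: "\<And>g. A g \<Longrightarrow> sound_fact g"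
  shows "sound_fact f"
proof -
  define p where "p = fact_prog f"
  define xs where "xs = list_decode (fact_args f)"
  define gs where "gs = list_decode (c_snd (c_snd p))"
  from assms(1) obtain g where tag: "c_fst p = 3"
    and g: "A g" "fact_prog g = c_fst (c_snd p)" "fact_val g = fact_val f"
    and len: "c_len (fact_args g) = c_len (c_snd (c_snd p))"
    and hs: "\<forall>k<c_len (c_snd (c_snd p)). \<exists>h. A h \<and> fact_prog h = c_nth (c_snd (c_snd p)) k
      \<and> fact_args h = fact_args f \<and> fact_val h = c_nth (fact_args g) k"
    unfolding by_Cn_def p_def by blast
  define ys where "ys = list_decode (fact_args g)"
  have len': "length ys = length gs"
    using len by (simp add: ys_def gs_def c_len_eq_length)
  obtain c0 where c0: "code c0 = c_fst (c_snd p)" "eval c0 ys (fact_val f)"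
    using A[OF g(1)] g(2,3) unfolding sound_fact_def ys_def by auto
  have "\<exists>c. code c = gs ! k \<and> eval c xs (ys ! k)" if k: "k < length gs" for k
  proof -
    obtain h where "A h" "fact_prog h = gs ! k" "fact_args h = fact_args f" "fact_val h = ys ! k"
      using hs k len' by (auto simp: gs_def ys_def c_len_eq_length c_nth_eq_nth)
    then show ?thesis
      using A[of h] unfolding sound_fact_def xs_def by auto
  qed
  then have progs: "\<forall>k\<in>{..<length gs}. \<exists>c. code c = gs ! k \<and> eval c xs (ys ! k)"
    by simp
  obtain G where G: "\<forall>k\<in>{..<length gs}. code (G k) = gs ! k \<and> eval (G k) xs (ys ! k)"
    using bchoice[OF progs] by blast
  define cs where "cs = map G [0..<length gs]"
  have "list_all2 (\<lambda>c y. eval c xs y) cs ys"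
    using G len' by (simp add: cs_def list_all2_conv_all_nth)
  then have "eval (Cn c0 cs) xs (fact_val f)"
    using c0(2) by (rule eval_Cn)
  moreover have "map code cs = gs"
    using G unfolding cs_def by (intro nth_equalityI) auto
  then have "code (Cn c0 cs) = p"
    using c0(1) tag by (simp add: code_c_pair gs_def c_pair_tag[symmetric])
  ultimately show ?thesis
    unfolding sound_fact_def xs_def p_def by blast
qed

lemma sound_by_Pr0:
  assumes "by_Pr0 A C f" and A: "\<And>g. A g \<Longrightarrow> sound_fact g" and C: "\<And>q. C q \<Longrightarrow> q \<in> range code"
  shows "sound_fact f"
proof -
  define xs where "xs = list_decode (fact_args f)"
  from assms(1) obtain g where tag: "c_fst (fact_prog f) = 4"
    and xs: "0 < c_len (fact_args f)" "c_nth (fact_args f) 0 = 0"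
    and g: "A g" "fact_prog g = c_fst (c_snd (fact_prog f))" "fact_args g = c_tl (fact_args f)"
      "fact_val g = fact_val f"
    and cert: "C (fact_prog f)"
    unfolding by_Pr0_def by blast
  obtain c where c: "code c = fact_prog f"
    using C[OF cert] by (metis rangeE)
  then obtain c1 c2 where c12: "c = Pr c1 c2" "code c1 = c_fst (c_snd (fact_prog f))"
    using code_eq_Pr[of c] tag by (metis c_pair_tag)
  obtain xs' where xs': "xs = 0 # xs'"
    using xs by (cases xs) (auto simp: xs_def c_len_eq_length c_nth_eq_nth)
  obtain c1' where "code c1' = c_fst (c_snd (fact_prog f))" "eval c1' xs' (fact_val f)"
    using A[OF g(1)] g(2-4) xs' by (auto simp: sound_fact_def list_decode_c_tl xs_def)
  then have "eval c1 xs' (fact_val f)"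
    using c12(2) by (metis code_eq_iff)
  then have "eval c xs (fact_val f)"
    using c12(1) xs' by (simp add: eval_Pr0)
  then show ?thesis
    using c unfolding sound_fact_def xs_def by blast
qed

lemma sound_by_PrS:
  assumes "by_PrS A f" and A: "\<And>g. A g \<Longrightarrow> sound_fact g"
  shows "sound_fact f"
proof -
  define xs where "xs = list_decode (fact_args f)"
  from assms(1) obtain g h where tag: "c_fst (fact_prog f) = 4"
    and xs: "0 < c_len (fact_args f)" "0 < c_nth (fact_args f) 0"
    and g: "A g" "fact_prog g = fact_prog f"
      "fact_args g = c_cons (c_nth (fact_args f) 0 - 1) (c_tl (fact_args f))"
    and h: "A h" "fact_prog h = c_snd (c_snd (fact_prog f))"
      "fact_args h = c_cons (c_nth (fact_args f) 0 - 1) (c_cons (fact_val g) (c_tl (fact_args f)))"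
      "fact_val h = fact_val f"
    unfolding by_PrS_def by blast
  obtain n xs' where xs': "xs = Suc n # xs'"
    using xs by (cases xs) (auto simp: xs_def c_len_eq_length c_nth_eq_nth gr0_conv_Suc)
  have args: "c_nth (fact_args f) 0 - 1 = n" "list_decode (c_tl (fact_args f)) = xs'"
    using xs' xs by (simp_all add: xs_def c_len_eq_length c_nth_eq_nth list_decode_c_tl)
  obtain c where c: "code c = fact_prog f" "eval c (n # xs') (fact_val g)"
    using A[OF g(1)] g(2,3) args by (auto simp: sound_fact_def)
  obtain c2 where c2: "code c2 = c_snd (c_snd (fact_prog f))" "eval c2 (n # fact_val g # xs') (fact_val f)"
    using A[OF h(1)] h(2-4) args by (auto simp: sound_fact_def)
  obtain c1 where "c = Pr c1 c2"
    using code_eq_Pr[of c] c(1) c2(1) tag by (metis c_pair_tag code_eq_iff)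
  then have "eval c xs (fact_val f)"
    using c(2) c2(2) xs' by (simp add: eval_PrS)
  then show ?thesis
    using c(1) unfolding sound_fact_def xs_def by blast
qed

lemma sound_by_Mn:
  assumes "by_Mn A f" and A: "\<And>g. A g \<Longrightarrow> sound_fact g"
  shows "sound_fact f"
proof -
  define xs where "xs = list_decode (fact_args f)"
  from assms(1) obtain g where tag: "c_fst (fact_prog f) = 5"
    and g: "A g" "fact_prog g = c_snd (fact_prog f)" "fact_args g = c_cons (fact_val f) (fact_args f)"
      "fact_val g = 0"
    and below: "\<forall>m<fact_val f. \<exists>g. A g \<and> fact_prog g = c_snd (fact_prog f)
      \<and> fact_args g = c_cons m (fact_args f) \<and> 0 < fact_val g"
    unfolding by_Mn_def by blast
  obtain c where c: "code c = c_snd (fact_prog f)" "eval c (fact_val f # xs) 0"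
    using A[OF g(1)] g(2-4) by (auto simp: sound_fact_def xs_def)
  have "\<exists>k>0. eval c (m # xs) k" if m: "m < fact_val f" for m
  proof -
    obtain g' where "A g'" "fact_prog g' = c_snd (fact_prog f)" "fact_args g' = c_cons m (fact_args f)"
      "0 < fact_val g'"
      using below m by blast
    then obtain c' where "code c' = c_snd (fact_prog f)" "eval c' (m # xs) (fact_val g')"
      using A[of g'] by (auto simp: sound_fact_def xs_def)
    moreover from this(1) c(1) have "c' = c"
      by (metis code_eq_iff)
    ultimately show ?thesis
      using \<open>0 < fact_val g'\<close> by auto
  qed
  then have "eval (Mn c) xs (fact_val f)"
    using c(2) by (blast intro: eval_Mn)
  moreover have "code (Mn c) = fact_prog f"
    using c(1) tag by (simp add: code_c_pair c_pair_tag[symmetric])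
  ultimately show ?thesis
    unfolding sound_fact_def xs_def by blast
qed

lemma justified_fact_sound:
  assumes "justified_fact A C f" "\<And>g. A g \<Longrightarrow> sound_fact g" "\<And>q. C q \<Longrightarrow> q \<in> range code"
  shows "sound_fact f"
  using assms(1) sound_by_Z sound_by_S sound_by_Id sound_by_Cn[OF _ assms(2)] sound_by_Pr0[OF _ assms(2,3)]
    sound_by_PrS[OF _ assms(2)] sound_by_Mn[OF _ assms(2)]
  unfolding justified_fact_def by blast

lemma justified_entry_mono:
  assumes "justified_entry A C e" "\<And>g. A g \<Longrightarrow> A' g" "\<And>q. C q \<Longrightarrow> C' q"
  shows "justified_entry A' C' e"
proof -
  have "by_Cn A f \<Longrightarrow> by_Cn A' f" "by_Pr0 A C f \<Longrightarrow> by_Pr0 A' C' f" "by_PrS A f \<Longrightarrow> by_PrS A' f"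
    "by_Mn A f \<Longrightarrow> by_Mn A' f" "justified_code C p \<Longrightarrow> justified_code C' p" for f p
    using assms(2,3) unfolding by_Cn_def by_Pr0_def by_PrS_def by_Mn_def justified_code_def by iprover+
  then show ?thesis
    using assms(1) unfolding justified_entry_def justified_fact_def by blast
qed

lemma derivation_sound_fact:
  assumes "derivation L" "c_pair 0 f \<in> set L"
  shows "sound_fact f"
proof -
  have "(\<forall>f. L ! i = c_pair 0 f \<longrightarrow> sound_fact f) \<and> (\<forall>p. L ! i = c_pair 1 p \<longrightarrow> p \<in> range code)"
    if "i < length L" for i
    using that
  proof (induction i rule: less_induct)
    case (less i)
    have facts: "sound_fact g" if "c_pair 0 g \<in> set (take i L)" for g
      using that less by (auto simp: in_set_conv_nth)
    have codes: "q \<in> range code" if "c_pair 1 q \<in> set (take i L)" for q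
      using that less by (auto simp: in_set_conv_nth)
    have "justified_entry (\<lambda>f. c_pair 0 f \<in> set (take i L)) (\<lambda>p. c_pair 1 p \<in> set (take i L)) (L ! i)"
      using assms(1) less.prems unfolding derivation_def by blast
    then show ?case
      unfolding justified_entry_def
      using justified_fact_sound[OF _ facts codes] justified_code_sound[OF _ codes] by auto
  qed
  then show ?thesis
    using assms(2) by (auto simp: in_set_conv_nth)
qed

lemma derivation_Nil: "derivation []"
  by (simp add: derivation_def)

lemma derivation_snoc_iff:
  "derivation (L @ [e]) \<longleftrightarrow>
    derivation L \<and> justified_entry (\<lambda>f. c_pair 0 f \<in> set L) (\<lambda>p. c_pair 1 p \<in> set L) e"
  unfolding derivation_def by (auto simp: nth_append less_Suc_eq)

lemma derivation_append: "derivation L1 \<Longrightarrow> derivation L2 \<Longrightarrow> derivation (L1 @ L2)"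
proof (induction L2 rule: rev_induct)
  case (snoc e L2)
  then show ?case
    unfolding append_assoc[symmetric] derivation_snoc_iff
    by (auto elim: justified_entry_mono)
qed simp

lemma derivation_collect:
  assumes "\<forall>x\<in>set xs. \<exists>L. derivation L \<and> a x \<in> set L"
  shows "\<exists>L. derivation L \<and> (\<forall>x\<in>set xs. a x \<in> set L)"
  using assms
proof (induction xs)
  case Nil
  then show ?case using derivation_Nil by auto
next
  case (Cons x xs)
  then obtain L1 L2 where "derivation L1" "\<forall>x\<in>set xs. a x \<in> set L1" "derivation L2" "a x \<in> set L2"
    by auto
  then show ?case by (intro exI[of _ "L1 @ L2"]) (auto intro: derivation_append)
qed

lemma derivation_extend:
  assumes "derivation L" "justified_entry (\<lambda>f. c_pair 0 f \<in> set L) (\<lambda>p. c_pair 1 p \<in> set L) e"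
  shows "\<exists>L'. derivation L' \<and> e \<in> set L'"
  using assms derivation_snoc_iff[of L e] by fastforce

lemma code_certified: "\<exists>L. derivation L \<and> c_pair 1 (code c) \<in> set L"
proof (induction c)
  case (Cn f gs)
  obtain L1 where "derivation L1" "\<forall>g\<in>set gs. c_pair 1 (code g) \<in> set L1"
    using derivation_collect[of gs "\<lambda>g. c_pair 1 (code g)"] Cn.IH(2) by blast
  moreover obtain L2 where "derivation L2" "c_pair 1 (code f) \<in> set L2"
    using Cn.IH(1) by blast
  ultimately show ?case
    by (intro derivation_extend[of "L1 @ L2"] derivation_append)
      (auto simp: justified_entry_def justified_code_def code_c_pair)
next
  case (Pr f g)
  then obtain L1 L2 where "derivation L1" "c_pair 1 (code f) \<in> set L1"
    "derivation L2" "c_pair 1 (code g) \<in> set L2"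
    by blast
  then show ?case
    by (intro derivation_extend[of "L1 @ L2"] derivation_append)
      (auto simp: justified_entry_def justified_code_def code_c_pair)
next
  case (Mn f)
  then obtain L where "derivation L" "c_pair 1 (code f) \<in> set L"
    by blast
  then show ?case
    by (intro derivation_extend) (auto simp: justified_entry_def justified_code_def code_c_pair)
qed (intro derivation_extend[OF derivation_Nil];
    simp add: justified_entry_def justified_code_def code_c_pair)+

abbreviation derives_fact :: "nat list \<Rightarrow> recf \<Rightarrow> nat list \<Rightarrow> nat \<Rightarrow> bool" where
  "derives_fact L c xs y \<equiv> c_pair 0 (fact_code (code c) (list_encode xs) y) \<in> set L"

lemma fact_derivable: "eval c xs y \<Longrightarrow> \<exists>L. derivation L \<and> derives_fact L c xs y"
proof (induction rule: eval.induct)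
  case (eval_Z xs)
  show ?case
    by (intro derivation_extend[OF derivation_Nil])
      (simp add: justified_entry_def justified_fact_def by_Z_def code_c_pair)
next
  case (eval_S x xs)
  show ?case
    by (intro derivation_extend[OF derivation_Nil])
      (simp add: justified_entry_def justified_fact_def by_S_def code_c_pair)
next
  case (eval_Id i xs)
  then show ?case
    by (intro derivation_extend[OF derivation_Nil])
      (simp add: justified_entry_def justified_fact_def by_Id_def code_c_pair)
next
  case (eval_Cn xs gs ys f y)
  have len: "length ys = length gs"
    using eval_Cn.IH(1) by (simp add: list_all2_lengthD)
  have "\<forall>p\<in>set (zip gs ys). \<exists>L. derivation L \<and> derives_fact L (fst p) xs (snd p)"
    using eval_Cn.IH(1) by (auto simp: list_all2_conv_all_nth in_set_zip)
  from derivation_collect[OF this] obtain L1 where L1: "derivation L1"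
    "\<forall>k<length gs. derives_fact L1 (gs ! k) xs (ys ! k)"
    using len by (auto simp: set_zip)
  obtain L2 where L2: "derivation L2" "derives_fact L2 f ys y"
    using eval_Cn.IH(2) by blast
  let ?A = "\<lambda>g. c_pair 0 g \<in> set (L1 @ L2)"
  have args: "\<exists>h. ?A h \<and> fact_prog h = c_nth (list_encode (map code gs)) k \<and> fact_args h = list_encode xs
      \<and> fact_val h = c_nth (list_encode ys) k" if k: "k < length gs" for k
    using L1(2) k len by (intro exI[of _ "fact_code (code (gs ! k)) (list_encode xs) (ys ! k)"]) auto
  have "by_Cn ?A (fact_code (code (Cn f gs)) (list_encode xs) y)"
    unfolding by_Cn_def
    by (simp add: code_c_pair, intro exI[of _ "fact_code (code f) (list_encode ys) y"])
      (use L2(2) len args in auto)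
  then show ?case
    using L1(1) L2(1)
    by (intro derivation_extend[of "L1 @ L2"] derivation_append)
      (simp_all add: justified_entry_def justified_fact_def)
next
  case (eval_Pr0 f xs y g)
  obtain L1 where L1: "derivation L1" "derives_fact L1 f xs y"
    using eval_Pr0.IH by blast
  obtain L2 where L2: "derivation L2" "c_pair 1 (code (Pr f g)) \<in> set L2"
    using code_certified by blast
  have "by_Pr0 (\<lambda>g. c_pair 0 g \<in> set (L1 @ L2)) (\<lambda>p. c_pair 1 p \<in> set (L1 @ L2))
      (fact_code (code (Pr f g)) (list_encode (0 # xs)) y)"
    unfolding by_Pr0_def using L1(2) L2(2)
    by (auto simp: code_c_pair c_tl_list_encode simp del: list_encode_Cons)
  then show ?case
    using L1(1) L2(1)
    by (intro derivation_extend[of "L1 @ L2"] derivation_append)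
      (simp_all add: justified_entry_def justified_fact_def)
next
  case (eval_PrS f g n xs y z)
  obtain L1 where L1: "derivation L1" "derives_fact L1 (Pr f g) (n # xs) y"
    using eval_PrS.IH(1) by blast
  obtain L2 where L2: "derivation L2" "derives_fact L2 g (n # y # xs) z"
    using eval_PrS.IH(2) by blast
  have "by_PrS (\<lambda>g. c_pair 0 g \<in> set (L1 @ L2)) (fact_code (code (Pr f g)) (list_encode (Suc n # xs)) z)"
    unfolding by_PrS_def
    by (simp add: code_c_pair, intro exI[of _ "fact_code (code (Pr f g)) (list_encode (n # xs)) y"]
        exI[of _ "fact_code (code g) (list_encode (n # y # xs)) z"])
      (use L1(2) L2(2) in \<open>auto simp: code_c_pair\<close>)
  then show ?case
    using L1(1) L2(1)
    by (intro derivation_extend[of "L1 @ L2"] derivation_append)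
      (simp_all add: justified_entry_def justified_fact_def)
next
  case (eval_Mn f n xs)
  obtain L1 where L1: "derivation L1" "derives_fact L1 f (n # xs) 0"
    using eval_Mn.IH(1) by blast
  obtain K where K: "\<forall>m<n. 0 < K m \<and> (\<exists>L. derivation L \<and> derives_fact L f (m # xs) (K m))"
    using eval_Mn.IH(2) by metis
  then obtain L2 where L2: "derivation L2" "\<forall>m<n. derives_fact L2 f (m # xs) (K m)"
    using derivation_collect[of "[0..<n]" "\<lambda>m. c_pair 0 (fact_code (code f) (list_encode (m # xs)) (K m))"]
    by auto
  let ?A = "\<lambda>g. c_pair 0 g \<in> set (L1 @ L2)"
  have below: "\<exists>g. ?A g \<and> fact_prog g = code f \<and> fact_args g = list_encode (m # xs) \<and> 0 < fact_val g"
    if m: "m < n" for m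
    using L2(2) K m by (intro exI[of _ "fact_code (code f) (list_encode (m # xs)) (K m)"]) auto
  have "by_Mn ?A (fact_code (code (Mn f)) (list_encode xs) n)"
    unfolding by_Mn_def
    by (simp add: code_c_pair, intro conjI exI[of _ "fact_code (code f) (list_encode (n # xs)) 0"])
      (use L1(2) below in auto)
  then show ?case
    using L1(1) L2(1)
    by (intro derivation_extend[of "L1 @ L2"] derivation_append)
      (simp_all add: justified_entry_def justified_fact_def)
qed

definition derives :: "nat list \<Rightarrow> nat \<Rightarrow> nat \<Rightarrow> bool" where
  "derives L n x \<longleftrightarrow> (\<exists>y. c_pair 0 (fact_code n (list_encode [x]) y) \<in> set L)"

theorem W_iff_derivation: "x \<in> W n \<longleftrightarrow> (\<exists>L. derivation L \<and> derives L n x)"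
proof
  assume "x \<in> W n"
  then obtain c y where "code c = n" "eval c [x] y"
    unfolding W_def by blast
  then show "\<exists>L. derivation L \<and> derives L n x"
    using fact_derivable unfolding derives_def by blast
next
  assume "\<exists>L. derivation L \<and> derives L n x"
  then obtain L y where "derivation L" "c_pair 0 (fact_code n (list_encode [x]) y) \<in> set L"
    unfolding derives_def by blast
  then have "sound_fact (fact_code n (list_encode [x]) y)"
    by (rule derivation_sound_fact)
  then show "x \<in> W n"
    unfolding sound_fact_def W_def by auto
qed

lemma derives_less: "derives (list_decode w) n x \<Longrightarrow> x < w"
proof -
  assume "derives (list_decode w) n x"
  then obtain y where "c_pair 0 (fact_code n (c_cons x 0) y) \<in> set (list_decode w)"
    unfolding derives_def by auto
  then have w: "c_pair 0 (fact_code n (c_cons x 0) y) < w"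
    by (rule member_list_decode_less)
  have "x < c_cons x 0"
    using le_c_pair_1[of x 0] by (simp add: c_cons_def)
  also have "\<dots> \<le> fact_code n (c_cons x 0) y"
    unfolding fact_code_def by (meson le_c_pair_1 le_c_pair_2 order_trans)
  also have "\<dots> \<le> c_pair 0 (fact_code n (c_cons x 0) y)"
    by (rule le_c_pair_2)
  finally show ?thesis
    using w by simp
qed

lemma derivation_list_decode_iff:
  "derivation (list_decode w) \<longleftrightarrow> (\<forall>i<c_len w. justified_entry
    (\<lambda>f. \<exists>e<i. c_nth w e = c_pair 0 f) (\<lambda>p. \<exists>e<i. c_nth w e = c_pair 1 p) (c_nth w i))"
proof -
  have "(\<exists>e<i. c_nth w e = x) \<longleftrightarrow> x \<in> set (take i (list_decode w))" if "i < length (list_decode w)" for i x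
    using that by (auto simp: c_nth_eq_nth in_set_conv_nth)
  then show ?thesis
    unfolding derivation_def by (simp add: c_len_eq_length c_nth_eq_nth cong: imp_cong)
qed

lemma ex_c_pair_0_iff:
  "(\<exists>f. (\<exists>e<i. c_nth w e = c_pair 0 f) \<and> P f) \<longleftrightarrow> (\<exists>e<i. c_fst (c_nth w e) = 0 \<and> P (c_snd (c_nth w e)))"
  by (metis c_fst_c_pair c_snd_c_pair c_pair_tag)

lemma rec_rel_derivation: "rec_fn k w \<Longrightarrow> rec_rel k (\<lambda>xs. derivation (list_decode (w xs)))"
  by (rule rec_rel_comp1, unfold derivation_list_decode_iff justified_entry_def justified_fact_def
      justified_code_def by_Z_def by_S_def by_Id_def by_Cn_def by_Pr0_def by_PrS_def by_Mn_def
      fact_prog_def fact_args_def fact_val_def, simp only: ex_c_pair_0_iff)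
    (rule rec_fn_code_intros | simp only: arg_drop)+

lemma derives_list_decode_iff:
  "derives (list_decode w) n x \<longleftrightarrow> (\<exists>i<c_len w. c_fst (c_nth w i) = 0
    \<and> fact_prog (c_snd (c_nth w i)) = n \<and> fact_args (c_snd (c_nth w i)) = c_cons x 0)"
proof -
  have entry: "(\<exists>y. e = c_pair 0 (fact_code n (c_cons x 0) y)) \<longleftrightarrow>
      c_fst e = 0 \<and> fact_prog (c_snd e) = n \<and> fact_args (c_snd e) = c_cons x 0" for e
    by (metis c_fst_c_pair c_snd_c_pair c_pair_tag fact_code_sel(1,2) fact_code_collapse)
  have "derives (list_decode w) n x \<longleftrightarrow>
      (\<exists>i<length (list_decode w). \<exists>y. list_decode w ! i = c_pair 0 (fact_code n (c_cons x 0) y))"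
    unfolding derives_def by (auto simp: in_set_conv_nth)
  then show ?thesis
    by (simp only: entry c_len_eq_length c_nth_eq_nth cong: conj_cong)
qed

lemma rec_rel_derives:
  "rec_fn k w \<Longrightarrow> rec_fn k n \<Longrightarrow> rec_fn k x \<Longrightarrow> rec_rel k (\<lambda>xs. derives (list_decode (w xs)) (n xs) (x xs))"
  by (rule rec_rel_comp3, unfold derives_list_decode_iff fact_prog_def fact_args_def)
    (rule rec_fn_code_intros | simp only: arg_drop)+

section \<open>Indices of existentially definable sets\<close>

lemma computable_iff_rec_fn: "computable t \<longleftrightarrow> rec_fn 1 (\<lambda>ys. t (arg ys 0))"
proof
  assume "computable t"
  then obtain c where "\<forall>n. eval c [n] (t n)"
    unfolding computable_def ..
  then show "rec_fn 1 (\<lambda>ys. t (arg ys 0))"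
    unfolding rec_fn_def by (intro exI[of _ c]) (auto simp: length_Suc_conv)
next
  assume "rec_fn 1 (\<lambda>ys. t (arg ys 0))"
  then obtain c where c: "\<forall>ys. length ys = 1 \<longrightarrow> eval c ys (t (arg ys 0))"
    unfolding rec_fn_def by blast
  have "eval c [n] (t n)" for n
    using c[rule_format, of "[n]"] by simp
  then show "computable t"
    unfolding computable_def by blast
qed

lemma code_const_prog:
  "code (const_prog n) = rec_nat (c_pair 0 0) (\<lambda>m r. c_pair 3 (c_pair (c_pair 1 0) (c_cons r 0))) n"
  by (induction n) (simp_all add: code_c_pair)

definition search_prog :: "recf \<Rightarrow> nat \<Rightarrow> recf" where
  "search_prog c n = Cn (Mn c) [const_prog n, Id 0]"

lemma search_prog_halts_iff:
  assumes c: "\<And>w n x. eval c [w, n, x] (if R w n x then 0 else 1)"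
  shows "(\<exists>y. eval (search_prog c n) [x] y) \<longleftrightarrow> (\<exists>w. R w n x)"
proof
  assume "\<exists>y. eval (search_prog c n) [x] y"
  then obtain y where "eval (Cn (Mn c) [const_prog n, Id 0]) [x] y"
    unfolding search_prog_def ..
  then obtain ys where ys: "list_all2 (\<lambda>g y. eval g [x] y) [const_prog n, Id 0] ys" "eval (Mn c) ys y"
    by (rule eval_CnE)
  then obtain a b where ab: "ys = [a, b]" "eval (const_prog n) [x] a" "eval (Id 0) [x] b"
    by (auto simp: list_all2_Cons1)
  have "a = n" "b = x"
    using eval_deterministic[OF ab(2) eval_const_prog] eval_deterministic[OF ab(3) eval_Id[of 0 "[x]"]]
    by simp_all
  then have "eval (Mn c) [n, x] y"
    using ys(2) ab(1) by simp
  then have "eval c [y, n, x] 0"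
    by (rule eval_MnE) simp
  then have "(if R y n x then 0 else 1) = (0::nat)"
    by (rule eval_deterministic[OF c])
  then show "\<exists>w. R w n x"
    by (auto split: if_splits)
next
  assume "\<exists>w. R w n x"
  define y where "y = (LEAST w. R w n x)"
  have "eval c (y # [n, x]) 0"
    using c[of y n x] LeastI_ex[OF \<open>\<exists>w. R w n x\<close>] by (simp add: y_def)
  moreover have "\<exists>k>0. eval c (m # [n, x]) k" if "m < y" for m
  proof -
    have "\<not> R m n x"
      using that not_less_Least unfolding y_def by blast
    then show ?thesis
      using c[of m n x] by (intro exI[of _ 1]) simp
  qed
  ultimately have "eval (Mn c) [n, x] y"
    by (blast intro: eval_Mn)
  moreover have "list_all2 (\<lambda>g y. eval g [x] y) [const_prog n, Id 0] [n, x]"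
    using eval_const_prog eval_Id[of 0 "[x]"] by simp
  ultimately show "\<exists>y. eval (search_prog c n) [x] y"
    unfolding search_prog_def by (blast intro: eval_Cn)
qed

theorem sigma1_W_index:
  assumes "rec_rel 3 (\<lambda>ys. R (arg ys 0) (arg ys 1) (arg ys 2))"
  shows "\<exists>t. computable t \<and> (\<forall>n. W (t n) = {x. \<exists>w. R w n x})"
proof -
  have "rec_fn 3 (\<lambda>ys. if R (arg ys 0) (arg ys 1) (arg ys 2) then 0 else 1)"
    by (intro rec_fn_If assms rec_fn_const)
  then obtain c
    where c3: "\<And>ys. length ys = 3 \<Longrightarrow> eval c ys (if R (arg ys 0) (arg ys 1) (arg ys 2) then 0 else 1)"
    unfolding rec_fn_def by blast
  have c: "eval c [w, n, x] (if R w n x then 0 else 1)" for w n x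
    using c3[of "[w, n, x]"] by (simp add: arg_def split del: if_split)
  have "W (code (search_prog c n)) = {x. \<exists>w. R w n x}" for n
    using search_prog_halts_iff[OF c] unfolding W_def by simp
  moreover have "computable (\<lambda>n. code (search_prog c n))"
    unfolding computable_iff_rec_fn search_prog_def
    by (simp add: code_c_pair code_const_prog) (rule rec_fn_code_intros)+
  ultimately show ?thesis by blast
qed

lemma sigma1_V_index:
  assumes "rec_rel 3 (\<lambda>ys.
    R (c_fst (arg ys 0)) (c_snd (arg ys 0)) (arg ys 1) (c_fst (arg ys 2)) (c_snd (arg ys 2)))"
  shows "\<exists>t. computable t \<and> (\<forall>n. V (t n) = {(a, b). \<exists>s z. R s z n a b})"
proof -
  obtain t where t: "computable t" "\<And>n. W (t n) = {x. \<exists>w. R (c_fst w) (c_snd w) n (c_fst x) (c_snd x)}"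
    using sigma1_W_index[OF assms] by blast
  have "(\<exists>w. R (c_fst w) (c_snd w) n a b) \<longleftrightarrow> (\<exists>s z. R s z n a b)" for n a b
    by (metis c_fst_c_pair c_snd_c_pair)
  moreover have "V m = {(a, b). c_pair a b \<in> W m}" for m
    by (simp add: V_def c_pair_def)
  ultimately show ?thesis
    using t by (intro exI[of _ t]) auto
qed

section \<open>Stages and paths\<close>

definition stage :: "nat \<Rightarrow> nat \<Rightarrow> (nat \<times> nat) set" where
  "stage n s = {(a, b). \<exists>w<s. derivation (list_decode w) \<and> derives (list_decode w) n (c_pair a b)}"

lemma mono_stage: "mono (stage n)"
  unfolding stage_def by (auto intro!: monoI dest: order.strict_trans2)

lemma stage_0: "stage n 0 = {}"
  by (simp add: stage_def)

lemma UN_stage: "(\<Union>s. stage n s) = V n"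
proof -
  have "(a, b) \<in> V n \<longleftrightarrow> (\<exists>L. derivation L \<and> derives L n (c_pair a b))" for a b
    by (simp add: V_def W_iff_derivation c_pair_def)
  also have "\<dots> a b \<longleftrightarrow> (\<exists>s. (a, b) \<in> stage n s)" for a b
  proof
    assume "\<exists>L. derivation L \<and> derives L n (c_pair a b)"
    then obtain L where "derivation (list_decode (list_encode L))"
      "derives (list_decode (list_encode L)) n (c_pair a b)"
      by auto
    then show "\<exists>s. (a, b) \<in> stage n s"
      unfolding stage_def by blast
  qed (auto simp: stage_def)
  finally show ?thesis by auto
qed

lemma stage_subset: "stage n s \<subseteq> {..<s} \<times> {..<s}"
proof
  fix p
  assume "p \<in> stage n s"
  then obtain a b w where "p = (a, b)" "w < s" "derives (list_decode w) n (c_pair a b)"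
    unfolding stage_def by blast
  moreover have "a \<le> c_pair a b" "b \<le> c_pair a b"
    by (rule le_c_pair_1, rule le_c_pair_2)
  ultimately show "p \<in> {..<s} \<times> {..<s}"
    using derives_less by fastforce
qed

definition path_code :: "(nat \<times> nat) set \<Rightarrow> nat \<Rightarrow> nat \<Rightarrow> nat \<Rightarrow> bool" where
  "path_code r z a b \<longleftrightarrow> 0 < c_len z \<and> c_nth z 0 = a \<and> c_nth z (c_len z - 1) = b
    \<and> (\<forall>l<c_len z - 1. (c_nth z l, c_nth z (Suc l)) \<in> r)"

lemma path_code_map_upt:
  "path_code r (list_encode (map f [0..<Suc k])) (f 0) (f k) \<longleftrightarrow> (\<forall>i<k. (f i, f (Suc i)) \<in> r)"
  unfolding path_code_def by (simp add: nth_append del: upt_Suc)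

lemma relpow_iff_path_code: "(a, b) \<in> r ^^ k \<longleftrightarrow> (\<exists>z. path_code r z a b \<and> c_len z = Suc k)"
proof
  assume "(a, b) \<in> r ^^ k"
  then obtain f where "f 0 = a" "f k = b" "\<forall>i<k. (f i, f (Suc i)) \<in> r"
    unfolding relpow_fun_conv by blast
  then show "\<exists>z. path_code r z a b \<and> c_len z = Suc k"
    using path_code_map_upt[of r f k] by (intro exI[of _ "list_encode (map f [0..<Suc k])"]) auto
next
  assume "\<exists>z. path_code r z a b \<and> c_len z = Suc k"
  then obtain z where z: "path_code r z a b" "c_len z = Suc k"
    by blast
  then show "(a, b) \<in> r ^^ k"
    unfolding relpow_fun_conv path_code_def by (intro exI[of _ "c_nth z"]) auto
qed

lemma path_code_c_len: "path_code r z a b \<Longrightarrow> c_len z = Suc (c_len z - 1)"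
  by (simp add: path_code_def)

lemma rtrancl_iff_path_code: "(a, b) \<in> r\<^sup>* \<longleftrightarrow> (\<exists>z. path_code r z a b)"
  unfolding rtrancl_power relpow_iff_path_code using path_code_c_len by blast

lemma trancl_iff_path_code: "(a, b) \<in> r\<^sup>+ \<longleftrightarrow> (\<exists>z. path_code r z a b \<and> 2 \<le> c_len z)"
proof -
  have "2 \<le> c_len z \<longleftrightarrow> 0 < c_len z - 1" for z
    by linarith
  then show ?thesis
    unfolding trancl_power relpow_iff_path_code using path_code_c_len by (metis diff_Suc_1)
qed

text \<open>A shortest path between distinct points of a relation on \<open>{..<s}\<close> has at most \<open>s * s\<close>
  steps, so its code is bounded by \<open>path_bound s\<close>.\<close>

definition path_bound :: "nat \<Rightarrow> nat" where
  "path_bound s = list_encode (replicate (Suc (s * s)) s)"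

lemma list_encode_le_replicate:
  "length L \<le> k \<Longrightarrow> \<forall>x\<in>set L. x \<le> s \<Longrightarrow> list_encode L \<le> list_encode (replicate k s)"
proof (induction L arbitrary: k)
  case (Cons x L)
  then obtain k' where k: "k = Suc k'" "length L \<le> k'"
    by (cases k) auto
  have "list_encode L \<le> list_encode (replicate k' s)"
    using Cons.IH k(2) Cons.prems(2) by simp
  moreover have "x \<le> s"
    using Cons.prems(2) by simp
  ultimately show ?case
    using k(1) by (simp add: c_cons_def c_pair_mono)
qed simp

lemma short_path_code:
  assumes r: "r \<subseteq> {..<s} \<times> {..<s}" and "(a, b) \<in> r\<^sup>*" "a \<noteq> b"
  shows "\<exists>z\<le>path_bound s. path_code r z a b"
proof -
  have "finite r"
    using r by (rule finite_subset) simp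
  moreover have "card r \<le> s * s"
    using card_mono[OF _ r] by simp
  moreover have "(a, b) \<in> (\<Union>k\<in>{k. k \<le> card r}. r ^^ k)"
    using assms(2) rtrancl_finite_eq_relpow[OF \<open>finite r\<close>] by simp
  ultimately obtain k where k: "k \<le> s * s" "(a, b) \<in> r ^^ k"
    using le_trans by blast
  then obtain f where f: "f 0 = a" "f k = b" "\<forall>i<k. (f i, f (Suc i)) \<in> r"
    unfolding relpow_fun_conv by blast
  have "k \<noteq> 0"
    using f assms(3) by (cases k) auto
  have "f i < s" if "i \<le> k" for i
  proof (cases "i < k")
    case True
    then show ?thesis using f(3) r by blast
  next
    case False
    then have "i = Suc (k - 1)" "k - 1 < k"
      using that \<open>k \<noteq> 0\<close> by simp_all
    then show ?thesis using f(3) r by blast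
  qed
  then have "list_encode (map f [0..<Suc k]) \<le> path_bound s"
    unfolding path_bound_def using k(1)
    by (intro list_encode_le_replicate) (auto simp del: upt_Suc simp: less_Suc_eq_le less_imp_le)
  then show ?thesis
    using path_code_map_upt[of r f k] f by blast
qed

lemma rec_fn_path_bound: "rec_fn k s \<Longrightarrow> rec_fn k (\<lambda>xs. path_bound (s xs))"
proof -
  assume s: "rec_fn k s"
  have "rec_fn k (\<lambda>xs. rec_nat 0 (\<lambda>m r. c_cons (s xs) r) (Suc (s xs * s xs)))"
    by (intro rec_fn_rec_nat rec_fn_c_cons rec_fn_Suc rec_fn_mult rec_fn_const rec_fn_arg s
        rec_fn_drop[OF s, where d=2, simplified])
  moreover have "rec_nat 0 (\<lambda>m r. c_cons x r) k = list_encode (replicate k x)" for x k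
    by (induction k) simp_all
  ultimately show ?thesis
    unfolding path_bound_def by simp
qed

lemma rec_rel_path_code_stage:
  assumes "rec_fn k n" "rec_fn k s" "rec_fn k z" "rec_fn k a" "rec_fn k b"
  shows "rec_rel k (\<lambda>xs. path_code (stage (n xs) (s xs)) (z xs) (a xs) (b xs))"
proof -
  have "rec_rel 5 (\<lambda>ys. path_code (stage (arg ys 0) (arg ys 1)) (arg ys 2) (arg ys 3) (arg ys 4))"
    unfolding path_code_def stage_def
    by (simp only: mem_Collect_eq prod.case)
      (rule rec_fn_code_intros rec_rel_derivation rec_rel_derives | simp only: arg_drop)+
  from rec_rel_compose[OF this, of "[n, s, z, a, b]" k] show ?thesis
    using assms by (simp add: arg_def numeral_eq_Suc)
qed

definition cyclic_stage :: "nat \<Rightarrow> nat \<Rightarrow> bool" where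
  "cyclic_stage n s \<longleftrightarrow> (\<exists>a<s. \<exists>b<s. a \<noteq> b
    \<and> (\<exists>z<Suc (path_bound s). path_code (stage n s) z a b)
    \<and> (\<exists>z<Suc (path_bound s). path_code (stage n s) z b a))"

lemma rec_rel_cyclic_stage: "rec_fn k n \<Longrightarrow> rec_fn k s \<Longrightarrow> rec_rel k (\<lambda>xs. cyclic_stage (n xs) (s xs))"
proof -
  have "rec_rel 2 (\<lambda>ys. cyclic_stage (arg ys 0) (arg ys 1))"
    unfolding cyclic_stage_def
    by (rule rec_fn_code_intros rec_rel_path_code_stage rec_fn_path_bound | simp only: arg_drop)+
  from rec_rel_compose[OF this, of "[n, s]" k]
  show "rec_fn k n \<Longrightarrow> rec_fn k s \<Longrightarrow> rec_rel k (\<lambda>xs. cyclic_stage (n xs) (s xs))"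
    by (simp add: arg_def)
qed

lemma cyclic_stage_iff: "cyclic_stage n s \<longleftrightarrow> \<not> antisym ((stage n s)\<^sup>*)"
proof
  assume "cyclic_stage n s"
  then show "\<not> antisym ((stage n s)\<^sup>*)"
    unfolding cyclic_stage_def antisym_def by (auto simp: rtrancl_iff_path_code)
next
  assume "\<not> antisym ((stage n s)\<^sup>*)"
  then obtain a b where ab: "a \<noteq> b" "(a, b) \<in> (stage n s)\<^sup>*" "(b, a) \<in> (stage n s)\<^sup>*"
    unfolding antisym_def by blast
  have below: "x < s" if "(x, y) \<in> (stage n s)\<^sup>*" "x \<noteq> y" for x y
    using that stage_subset by (auto elim: converse_rtranclE)
  obtain z where "z \<le> path_bound s" "path_code (stage n s) z a b"
    using short_path_code[OF stage_subset ab(2,1)] by blast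
  moreover obtain z' where "z' \<le> path_bound s" "path_code (stage n s) z' b a"
    using short_path_code[OF stage_subset ab(3)] ab(1) by blast
  ultimately show "cyclic_stage n s"
    unfolding cyclic_stage_def less_Suc_eq_le using ab below by blast
qed

lemma computable_trancl_index: "\<exists>t. computable t \<and> (\<forall>n. V (t n) = (V n)\<^sup>+)"
proof -
  have "rec_rel 3 (\<lambda>ys. path_code (stage (arg ys 1) (c_fst (arg ys 0))) (c_snd (arg ys 0))
      (c_fst (arg ys 2)) (c_snd (arg ys 2)) \<and> 2 \<le> c_len (c_snd (arg ys 0)))"
    by (intro rec_rel_conj rec_rel_path_code_stage rec_rel_le rec_fn_code_intros)
  from sigma1_V_index[OF this] obtain t where t: "computable t"
    "\<And>n. V (t n) = {(a, b). \<exists>s z. path_code (stage n s) z a b \<and> 2 \<le> c_len z}"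
    by blast
  have "V (t n) = (\<Union>s. (stage n s)\<^sup>+)" for n
    unfolding t(2) by (auto simp: trancl_iff_path_code; blast)
  then have "V (t n) = (V n)\<^sup>+" for n
    by (simp add: trancl_UN_mono[OF mono_stage, symmetric] UN_stage)
  with t(1) show ?thesis by blast
qed

lemma computable_rtrancl_index: "\<exists>t. computable t \<and> (\<forall>n. V (t n) = (V n)\<^sup>*)"
proof -
  have "rec_rel 3 (\<lambda>ys. path_code (stage (arg ys 1) (c_fst (arg ys 0))) (c_snd (arg ys 0))
      (c_fst (arg ys 2)) (c_snd (arg ys 2)))"
    by (intro rec_rel_path_code_stage rec_fn_code_intros)
  from sigma1_V_index[OF this] obtain t where t: "computable t"
    "\<And>n. V (t n) = {(a, b). \<exists>s z. path_code (stage n s) z a b}"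
    by blast
  have "V (t n) = (\<Union>s. (stage n s)\<^sup>*)" for n
    unfolding t(2) by (auto simp: rtrancl_iff_path_code; blast)
  then have "V (t n) = (V n)\<^sup>*" for n
    by (simp add: rtrancl_UN_mono[OF mono_stage, symmetric] UN_stage)
  with t(1) show ?thesis by blast
qed

lemma computable_partial_order_index:
  "\<exists>t. computable t \<and> (\<forall>n. partial_order_on UNIV (V (t n)))
    \<and> (\<forall>n. partial_order_on UNIV (V n) \<longrightarrow> V (t n) = V n)"
proof -
  have "rec_rel 3 (\<lambda>ys. \<not> cyclic_stage (arg ys 1) (c_fst (arg ys 0))
      \<and> path_code (stage (arg ys 1) (c_fst (arg ys 0))) (c_snd (arg ys 0)) (c_fst (arg ys 2)) (c_snd (arg ys 2)))"
    by (intro rec_rel_conj rec_rel_not rec_rel_cyclic_stage rec_rel_path_code_stage rec_fn_code_intros)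
  from sigma1_V_index[OF this] obtain t where t: "computable t"
    "\<And>n. V (t n) = {(a, b). \<exists>s z. \<not> cyclic_stage n s \<and> path_code (stage n s) z a b}"
    by blast
  have V_t: "V (t n) = (\<Union>s\<in>{s. antisym ((stage n s)\<^sup>*)}. (stage n s)\<^sup>*)" for n
    unfolding t(2) by (auto simp: rtrancl_iff_path_code cyclic_stage_iff; blast)
  have "partial_order_on UNIV (V (t n))" for n
    unfolding V_t
    by (rule partial_order_on_UN_antisym_rtrancl[OF mono_stage]) (simp add: stage_0 antisym_Id)
  moreover have "V (t n) = V n" if "partial_order_on UNIV (V n)" for n
    using UN_antisym_rtrancl_eq[OF mono_stage] that by (simp add: V_t UN_stage)
  ultimately show ?thesis
    using t(1) by blast
qed

theorem proposition16:
  shows "(\<exists>t. computable t \<and> (\<forall>n. V (t n) \<in> ceT) \<and> (\<forall>n. V n \<in> ceT \<longrightarrow> V n = V (t n))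
           \<and> (\<forall>m n. V m = V n \<longrightarrow> V (t m) = V (t n)))
    \<and> (\<exists>p. computable p \<and> (\<forall>n. V (p n) \<in> ceP) \<and> (\<forall>n. V n \<in> ceP \<longrightarrow> V n = V (p n))
           \<and> (\<forall>m n. V m = V n \<longrightarrow> V (p m) = V (p n)))
    \<and> (\<exists>oo. computable oo \<and> (\<forall>n. V (oo n) \<in> ceO) \<and> (\<forall>n. V n \<in> ceO \<longrightarrow> V n = V (oo n)))"
proof (intro conjI)
  obtain t where t: "computable t" "\<And>n. V (t n) = (V n)\<^sup>+"
    using computable_trancl_index by blast
  show "\<exists>t. computable t \<and> (\<forall>n. V (t n) \<in> ceT) \<and> (\<forall>n. V n \<in> ceT \<longrightarrow> V n = V (t n))
      \<and> (\<forall>m n. V m = V n \<longrightarrow> V (t m) = V (t n))"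
    using t unfolding ceT_def ce_rel_def by (intro exI[of _ t]) auto
next
  obtain p where p: "computable p" "\<And>n. V (p n) = (V n)\<^sup>*"
    using computable_rtrancl_index by blast
  show "\<exists>p. computable p \<and> (\<forall>n. V (p n) \<in> ceP) \<and> (\<forall>n. V n \<in> ceP \<longrightarrow> V n = V (p n))
      \<and> (\<forall>m n. V m = V n \<longrightarrow> V (p m) = V (p n))"
    using p unfolding ceP_def ce_rel_def preorder_on_def
    by (intro exI[of _ p]) (auto simp: refl_rtrancl trans_rtrancl rtrancl_eq_self)
next
  obtain oo where "computable oo" "\<And>n. partial_order_on UNIV (V (oo n))"
    "\<And>n. partial_order_on UNIV (V n) \<Longrightarrow> V (oo n) = V n"
    using computable_partial_order_index by blast
  then show "\<exists>oo. computable oo \<and> (\<forall>n. V (oo n) \<in> ceO) \<and> (\<forall>n. V n \<in> ceO \<longrightarrow> V n = V (oo n))"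
    unfolding ceO_def ce_rel_def by auto
qed

end
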